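(* Let $f:A\to B$ be a homomorphism of abelian groups and let $\kappa$ be an infinite regular cardinal greater than the minimal number of generators of $A$. If $D$ is $L_f$-local, then $D^{\kappa}_{<\kappa}$ is $L_f$-local.
   Context: All groups are abelian. A homomorphism $f:X\to Y$ is orthogonal to a group $B$ if composition with $f$ induces a bijection $\mathop{\rm Hom}(Y,B)\to\mathop{\rm Hom}(X,B)$. For a homomorphism $f$, the $f$-localization $L_f$ is the localization functor whose local groups are exactly the groups $D$ to which $f$ is orthogonal ($L_f$-local means $f$ is orthogonal to $D$). For cardinals $\kappa\geq\lambda$ with $\lambda$ infinite, $D^\kappa_{<\lambda}$ denotes the subgroup of $\prod_\kappa D$ consisting of those elements whose support has cardinality less than $\lambda$. *)

theory Defs
  imports "HOL-Algebra.Algebra"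
begin

text \<open>Abelian groups are HOL-Algebra commutative groups (written multiplicatively).
  Homomorphisms G0 to D are taken up to equality on the carrier.\<close>

text \<open>f : G0 to H0 is orthogonal to D: precomposition with f, Hom(H0,D) to Hom(G0,D),
  is a bijection (homomorphisms identified when they agree on the carrier).\<close>
definition orthogonal ::
  "('a, 'm1) monoid_scheme \<Rightarrow> ('b, 'm2) monoid_scheme \<Rightarrow> ('a \<Rightarrow> 'b)
     \<Rightarrow> ('d, 'm3) monoid_scheme \<Rightarrow> bool" where
  "orthogonal G0 H0 f D \<longleftrightarrow>
     (\<forall>g \<in> hom G0 D. \<exists>h \<in> hom H0 D. \<forall>x \<in> carrier G0. h (f x) = g x) \<and>
     (\<forall>h1 \<in> hom H0 D. \<forall>h2 \<in> hom H0 D.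
        (\<forall>x \<in> carrier G0. h1 (f x) = h2 (f x)) \<longrightarrow> (\<forall>y \<in> carrier H0. h1 y = h2 y))"

definition Lf_local ::
  "('a, 'm1) monoid_scheme \<Rightarrow> ('b, 'm2) monoid_scheme \<Rightarrow> ('a \<Rightarrow> 'b)
     \<Rightarrow> ('d, 'm3) monoid_scheme \<Rightarrow> bool" where
  "Lf_local G0 H0 f D \<longleftrightarrow> orthogonal G0 H0 f D"

text \<open>D^\<kappa>_{<\<lambda>}: the subgroup of the product of copies of D indexed by I (with |I| = \<kappa>)
  of elements whose support has cardinality < \<lambda> (\<lambda> given as a cardinal relation).\<close>
definition small_support_power ::
  "('d, 'm) monoid_scheme \<Rightarrow> 'i set \<Rightarrow> 'c rel \<Rightarrow> ('i \<Rightarrow> 'd) monoid" where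
  "small_support_power D I lam =
     \<lparr> carrier = {x. x \<in> I \<rightarrow>\<^sub>E carrier D \<and> card_of {i \<in> I. x i \<noteq> \<one>\<^bsub>D\<^esub>} <o lam},
       monoid.mult = (\<lambda>x y. \<lambda>i \<in> I. x i \<otimes>\<^bsub>D\<^esub> y i),
       one = (\<lambda>i \<in> I. \<one>\<^bsub>D\<^esub>) \<rparr>"

end

theory Submission
  imports Defs
begin

(* Write P for D^kappa_{<kappa}, the group of functions I -> D whose support
   has size < kappa, and fix a generating set S of A with |S| < kappa.
   A homomorphism into P is the same thing as a family of homomorphisms into D, one per
   coordinate i in I, whose values have small support; so both halves of the orthogonality
   of f to P are checked coordinatewise.
   Uniqueness: two maps B -> P agreeing on f(A) agree in every coordinate, by uniqueness
   of extensions along f into D.  This works for any support bound.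
   Existence: extend each coordinate g_i of g : A -> P to h_i : B -> D.  If g_i kills S
   then g_i is trivial (S generates A), hence so is h_i (uniqueness again).  Thus the
   support of h(b) lies in the union over s in S of the supports of g(s), a union of fewer
   than kappa sets of size < kappa, which is small because kappa is regular. *)

lemma small_support_power_carrier:
  "x \<in> carrier (small_support_power D I lam) \<longleftrightarrow>
     x \<in> I \<rightarrow>\<^sub>E carrier D \<and> card_of {i \<in> I. x i \<noteq> \<one>\<^bsub>D\<^esub>} <o lam"
  by (simp add: small_support_power_def)

lemma small_support_power_mult:
  "x \<otimes>\<^bsub>small_support_power D I lam\<^esub> y = (\<lambda>i \<in> I. x i \<otimes>\<^bsub>D\<^esub> y i)"
  by (simp add: small_support_power_def)

text \<open>Elements of the power are extensional, so they are determined by their coordinates in I.\<close>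
lemma small_support_power_eqI:
  assumes "x \<in> carrier (small_support_power D I lam)"
    and "y \<in> carrier (small_support_power D I lam)"
    and "\<And>i. i \<in> I \<Longrightarrow> x i = y i"
  shows "x = y"
  using assms by (auto simp: small_support_power_carrier intro: PiE_ext)

lemma small_support_power_coordinate_hom:
  assumes "h \<in> hom H (small_support_power D I lam)" and "i \<in> I"
  shows "(\<lambda>b. h b i) \<in> hom H D"
proof (rule homI)
  fix b assume "b \<in> carrier H"
  then show "h b i \<in> carrier D"
    using assms hom_in_carrier[OF assms(1)] by (auto simp: small_support_power_carrier)
next
  fix x y assume "x \<in> carrier H" "y \<in> carrier H"
  then show "h (x \<otimes>\<^bsub>H\<^esub> y) i = h x i \<otimes>\<^bsub>D\<^esub> h y i"
    using assms by (simp add: hom_mult small_support_power_mult)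
qed

lemma small_support_power_assemble_hom:
  assumes hom: "\<And>i. i \<in> I \<Longrightarrow> hh i \<in> hom B D"
    and small: "\<And>b. b \<in> carrier B \<Longrightarrow> card_of {i \<in> I. hh i b \<noteq> \<one>\<^bsub>D\<^esub>} <o lam"
  shows "(\<lambda>b. \<lambda>i \<in> I. hh i b) \<in> hom B (small_support_power D I lam)"
proof (rule homI)
  fix b assume b: "b \<in> carrier B"
  have "{i \<in> I. (\<lambda>i \<in> I. hh i b) i \<noteq> \<one>\<^bsub>D\<^esub>} = {i \<in> I. hh i b \<noteq> \<one>\<^bsub>D\<^esub>}" by auto
  then show "(\<lambda>i \<in> I. hh i b) \<in> carrier (small_support_power D I lam)"
    using small[OF b] hom_in_carrier[OF hom b] by (simp add: small_support_power_carrier)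
next
  fix x y assume "x \<in> carrier B" "y \<in> carrier B"
  then show "(\<lambda>i \<in> I. hh i (x \<otimes>\<^bsub>B\<^esub> y)) =
      (\<lambda>i \<in> I. hh i x) \<otimes>\<^bsub>small_support_power D I lam\<^esub> (\<lambda>i \<in> I. hh i y)"
    by (auto simp: small_support_power_mult hom_mult[OF hom] intro: restrict_ext)
qed

lemma orthogonal_extends:
  assumes "orthogonal A B f D" and "g \<in> hom A D"
  shows "\<exists>h \<in> hom B D. \<forall>x \<in> carrier A. h (f x) = g x"
  using assms unfolding orthogonal_def by blast

lemma orthogonal_unique:
  assumes "orthogonal A B f D" and "h1 \<in> hom B D" and "h2 \<in> hom B D"
    and "\<And>x. x \<in> carrier A \<Longrightarrow> h1 (f x) = h2 (f x)" and "y \<in> carrier B"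
  shows "h1 y = h2 y"
  using assms unfolding orthogonal_def by blast

lemma hom_trivial_if_kills_generators:
  assumes "group A" "group D" "g \<in> hom A D"
    and "S \<subseteq> carrier A" "generate A S = carrier A" "\<forall>s \<in> S. g s = \<one>\<^bsub>D\<^esub>"
    and "a \<in> carrier A"
  shows "g a = \<one>\<^bsub>D\<^esub>"
proof -
  interpret group_hom A D g
    using assms(1-3) by (simp add: group_hom_def group_hom_axioms_def)
  have "S \<subseteq> kernel A D g" using assms(4,6) by (auto simp: kernel_def)
  then have "generate A S \<subseteq> kernel A D g"
    using G.generate_subgroup_incl subgroup_kernel by blast
  then show ?thesis using assms(5,7) by (auto simp: kernel_def)
qed

lemma orthogonal_extension_of_trivial:
  assumes "orthogonal A B f D" and "monoid D" and "h \<in> hom B D"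
    and "\<And>x. x \<in> carrier A \<Longrightarrow> h (f x) = \<one>\<^bsub>D\<^esub>" and "y \<in> carrier B"
  shows "h y = \<one>\<^bsub>D\<^esub>"
proof -
  have one_hom: "(\<lambda>b. \<one>\<^bsub>D\<^esub>) \<in> hom B D"
    using assms(2) by (auto simp: hom_def monoid.l_one)
  show ?thesis
    using orthogonal_unique[OF assms(1,3) one_hom assms(4,5)] .
qed

lemma orthogonal_power_unique:
  assumes orth: "orthogonal A B f D"
    and h1: "h1 \<in> hom B (small_support_power D I lam)"
    and h2: "h2 \<in> hom B (small_support_power D I lam)"
    and eq: "\<forall>x \<in> carrier A. h1 (f x) = h2 (f x)" and y: "y \<in> carrier B"
  shows "h1 y = h2 y"
proof (rule small_support_power_eqI)
  show "h1 y \<in> carrier (small_support_power D I lam)" "h2 y \<in> carrier (small_support_power D I lam)"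
    using hom_in_carrier[OF h1 y] hom_in_carrier[OF h2 y] .
  fix i assume i: "i \<in> I"
  show "h1 y i = h2 y i"
    using orthogonal_unique[OF orth small_support_power_coordinate_hom[OF h1 i]
        small_support_power_coordinate_hom[OF h2 i] _ y] eq by simp
qed

lemma orthogonal_power_extension:
  fixes I :: "'i set" and D :: "('d, 'm) monoid_scheme"
  defines "P \<equiv> small_support_power D I (card_of I)"
  assumes "group A" "group D" "f \<in> hom A B" and orth: "orthogonal A B f D"
    and "Cinfinite (card_of I)" "regularCard (card_of I)"
    and S: "S \<subseteq> carrier A" "generate A S = carrier A" "card_of S <o card_of I"
    and g: "g \<in> hom A P"
  shows "\<exists>h \<in> hom B P. \<forall>x \<in> carrier A. h (f x) = g x"
proof -
  have g_coord: "(\<lambda>a. g a i) \<in> hom A D" if "i \<in> I" for i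
    using small_support_power_coordinate_hom[OF g[unfolded P_def] that] .
  have "\<forall>i \<in> I. \<exists>h. h \<in> hom B D \<and> (\<forall>x \<in> carrier A. h (f x) = g x i)"
    using orthogonal_extends[OF orth g_coord] by blast
  from bchoice[OF this] obtain hh
    where hh: "\<forall>i \<in> I. hh i \<in> hom B D \<and> (\<forall>x \<in> carrier A. hh i (f x) = g x i)" ..
  then have hh_hom: "\<And>i. i \<in> I \<Longrightarrow> hh i \<in> hom B D"
    and hh_ext: "\<And>i x. i \<in> I \<Longrightarrow> x \<in> carrier A \<Longrightarrow> hh i (f x) = g x i"
    by simp_all
  have support: "{i \<in> I. hh i b \<noteq> \<one>\<^bsub>D\<^esub>} \<subseteq> (\<Union>s \<in> S. {i \<in> I. g s i \<noteq> \<one>\<^bsub>D\<^esub>})"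
    if b: "b \<in> carrier B" for b
  proof (rule subsetI, rule ccontr)
    fix i assume i: "i \<in> {i \<in> I. hh i b \<noteq> \<one>\<^bsub>D\<^esub>}"
      and "i \<notin> (\<Union>s \<in> S. {i \<in> I. g s i \<noteq> \<one>\<^bsub>D\<^esub>})"
    then have i_in: "i \<in> I" and kills: "\<forall>s \<in> S. g s i = \<one>\<^bsub>D\<^esub>" by auto
    have "g x i = \<one>\<^bsub>D\<^esub>" if "x \<in> carrier A" for x
      using hom_trivial_if_kills_generators[OF assms(2,3) g_coord[OF i_in] S(1,2) kills that] .
    then have "hh i (f x) = \<one>\<^bsub>D\<^esub>" if "x \<in> carrier A" for x
      using hh_ext[OF i_in that] that by simp
    then have "hh i b = \<one>\<^bsub>D\<^esub>"
      using orthogonal_extension_of_trivial[OF orth group.is_monoid[OF assms(3)] hh_hom[OF i_in] _ b]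
      by simp
    then show False using i by simp
  qed
  have union_small: "card_of (\<Union>s \<in> S. {i \<in> I. g s i \<noteq> \<one>\<^bsub>D\<^esub>}) <o card_of I"
  proof (rule regularCard_UNION_bound[OF assms(6,7) S(3)])
    fix s assume "s \<in> S"
    then have "g s \<in> carrier P" using hom_in_carrier[OF g] S(1) by blast
    then show "card_of {i \<in> I. g s i \<noteq> \<one>\<^bsub>D\<^esub>} <o card_of I"
      by (simp add: P_def small_support_power_carrier)
  qed
  have small: "card_of {i \<in> I. hh i b \<noteq> \<one>\<^bsub>D\<^esub>} <o card_of I" if "b \<in> carrier B" for b
    using ordLeq_ordLess_trans[OF card_of_mono1[OF support[OF that]] union_small] .
  define h where "h = (\<lambda>b. \<lambda>i \<in> I. hh i b)"
  have h: "h \<in> hom B P"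
    unfolding h_def P_def by (rule small_support_power_assemble_hom[OF hh_hom small])
  have extends: "h (f x) = g x" if x: "x \<in> carrier A" for x
  proof (rule small_support_power_eqI)
    show "h (f x) \<in> carrier (small_support_power D I (card_of I))"
      using hom_in_carrier[OF h hom_in_carrier[OF assms(4) x]] by (simp add: P_def)
    show "g x \<in> carrier (small_support_power D I (card_of I))"
      using hom_in_carrier[OF g x] by (simp add: P_def)
  qed (simp add: h_def hh_ext x)
  show ?thesis using h extends by blast
qed

theorem lemma3:
  fixes A :: "('a, 'm1) monoid_scheme" and B :: "('b, 'm2) monoid_scheme"
    and D :: "('d, 'm3) monoid_scheme" and f :: "'a \<Rightarrow> 'b" and I :: "'i set"
  assumes "comm_group A" and "comm_group B" and "comm_group D"
    and "f \<in> hom A B"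
    and "infinite I" and "regularCard (card_of I)"
    and "\<exists>S \<subseteq> carrier A. generate A S = carrier A \<and> card_of S <o card_of I"
    and "Lf_local A B f D"
  shows "Lf_local A B f (small_support_power D I (card_of I))"
proof -
  have groups: "group A" "group D" using assms(1,3) comm_group_def by blast+
  have orth: "orthogonal A B f D" using assms(8) Lf_local_def by blast
  have Cinf: "Cinfinite (card_of I)"
    using assms(5) by (simp add: cinfinite_def card_of_Card_order)
  obtain S where S: "S \<subseteq> carrier A" "generate A S = carrier A" "card_of S <o card_of I"
    using assms(7) by blast
  show ?thesis
    unfolding Lf_local_def orthogonal_def
  proof (intro conjI ballI impI)
    fix g assume "g \<in> hom A (small_support_power D I (card_of I))"
    then show "\<exists>h \<in> hom B (small_support_power D I (card_of I)). \<forall>x \<in> carrier A. h (f x) = g x"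
      by (rule orthogonal_power_extension[OF groups assms(4) orth Cinf assms(6) S])
  next
    fix h1 h2 y
    assume "h1 \<in> hom B (small_support_power D I (card_of I))"
      "h2 \<in> hom B (small_support_power D I (card_of I))"
      "\<forall>x \<in> carrier A. h1 (f x) = h2 (f x)" "y \<in> carrier B"
    then show "h1 y = h2 y" by (rule orthogonal_power_unique[OF orth])
  qed
qed

end
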